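(* Let $\gamma\colon[0,1]\to(0,1)^d$ be a $1$-Lipschitz curve which is $\theta$-flat in direction $u\in\mathbb{S}^{d-1}$ around an interval $R_0\subseteq[0,1]$, where $\theta\in(0,1/3)$. Let $(a,b)\subseteq R_0$, $q\in R_0\setminus(a,b)$, $r\in\mathbb{R}$, $\tau>0$, and let $h\colon[0,1]^d\to\mathbb{R}$ be a Lipschitz function with $h(x)=r+\tau\|x-\gamma(q)\|$ for $x\in\{\gamma(a),\gamma(b)\}$. Then, writing $(h\circ\gamma)\big|_a^b=h(\gamma(b))-h(\gamma(a))$, $$\big|(h\circ\gamma)\big|_a^b-\tau(b-a)\big|\leq 3\theta\tau(b-a)\quad\text{if } q\leq a\leq b,$$ $$\big|(h\circ\gamma)\big|_a^b-\tau(a-b)\big|\leq 3\theta\tau(b-a)\quad\text{if } a\leq b\leq q.$$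
   Context: A Lipschitz curve is a Lipschitz map $\gamma\colon I\to\mathbb{R}^d$, $I$ a closed interval, whose derivative is bounded away from zero in norm a.e. $\gamma$ is $\theta$-flat in direction $u$ around an interval $R_0$ if for all $t_1,t_2\in[0,1]$ with $\operatorname{dist}(t_i,R_0)<\mathcal{L}(R_0)$ (length of $R_0$) we have $\|\gamma(t_1)-\gamma(t_2)-(t_1-t_2)u\|\leq\theta|t_1-t_2|$. *)

theory Defs
  imports "HOL-Analysis.Analysis"
begin

definition lipschitz_curve :: "real \<Rightarrow> (real \<Rightarrow> 'a::euclidean_space) \<Rightarrow> bool" where
  "lipschitz_curve L \<gamma> \<longleftrightarrow>
     L-lipschitz_on {0..1} \<gamma> \<and>
     (\<exists>c>0. AE t in lborel. t \<in> {0..1} \<longrightarrow>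
        \<gamma> differentiable (at t) \<and> c \<le> norm (vector_derivative \<gamma> (at t)))"

definition flat_around :: "real \<Rightarrow> 'a::euclidean_space \<Rightarrow> real \<Rightarrow> real \<Rightarrow> (real \<Rightarrow> 'a) \<Rightarrow> bool" where
  "flat_around \<theta> u r0 r1 \<gamma> \<longleftrightarrow>
     (\<forall>t1\<in>{0..1}. \<forall>t2\<in>{0..1}.
        infdist t1 {r0..r1} < r1 - r0 \<longrightarrow> infdist t2 {r0..r1} < r1 - r0 \<longrightarrow>
        norm (\<gamma> t1 - \<gamma> t2 - (t1 - t2) *\<^sub>R u) \<le> \<theta> * \<bar>t1 - t2\<bar>)"

end

theory Submission
  imports Defs
begin

text \<open>On R0 the curve moves almost parallel to the unit vector u. Seen from \<gamma> q with q \<le> a,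
  both \<gamma> a - \<gamma> q and \<gamma> b - \<gamma> a are close to nonnegative multiples of u, so adding the second to the
  first increases the norm by b - a up to 3 \<theta> (b - a): the upper bound is the triangle inequality,
  the lower bound compares inner products with \<gamma> a - \<gamma> q. Since h agrees with r + \<tau> dist(-, \<gamma> q)
  at \<gamma> a and \<gamma> b, scaling by \<tau> gives the claim; the case b \<le> q is the same argument for the
  reversed parametrisation.\<close>

lemma norm_near_scaled_unit:
  fixes u v :: "'a::real_normed_vector"
  assumes "norm u = 1" "0 \<le> s" "norm (v - s *\<^sub>R u) \<le> e"
  shows "\<bar>norm v - s\<bar> \<le> e"
proof -
  have "norm (s *\<^sub>R u) = s"
    using assms(1,2) by simp
  then show ?thesis
    using assms(3) norm_triangle_ineq3[of v "s *\<^sub>R u"] by linarith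
qed

lemma inner_unit_ge_near_scaled_unit:
  fixes u v :: "'a::real_inner"
  assumes u: "norm u = 1" and \<theta>: "0 \<le> \<theta>" "\<theta> \<le> 1/2" and s: "0 \<le> s"
    and v: "norm (v - s *\<^sub>R u) \<le> \<theta> * s"
  shows "(1 - 2 * \<theta>) * norm v \<le> u \<bullet> v"
proof -
  have "u \<bullet> v = s + u \<bullet> (v - s *\<^sub>R u)"
    using u by (simp add: inner_diff_right dot_square_norm)
  moreover have "\<bar>u \<bullet> (v - s *\<^sub>R u)\<bar> \<le> \<theta> * s"
    using Cauchy_Schwarz_ineq2[of u "v - s *\<^sub>R u"] u v by simp
  ultimately have uv: "s - \<theta> * s \<le> u \<bullet> v"
    by linarith
  have "norm v \<le> s + \<theta> * s"
    using norm_near_scaled_unit[OF u s v] by linarith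
  then have "(1 - 2 * \<theta>) * norm v \<le> (1 - 2 * \<theta>) * (s + \<theta> * s)"
    using \<theta> by (intro mult_left_mono) auto
  also have "\<dots> = s - \<theta> * s - 2 * (\<theta> * \<theta> * s)"
    by (simp add: algebra_simps)
  also have "\<dots> \<le> s - \<theta> * s"
    using \<theta> s by simp
  finally show ?thesis
    using uv by linarith
qed

lemma norm_add_near_direction:
  fixes u v d :: "'a::real_inner"
  assumes u: "norm u = 1" and \<theta>: "0 \<le> \<theta>" "\<theta> \<le> 1/2" and s: "0 \<le> s" and t: "0 \<le> t"
    and v: "norm (v - s *\<^sub>R u) \<le> \<theta> * s" and d: "norm (d - t *\<^sub>R u) \<le> \<theta> * t"
  shows "\<bar>norm (v + d) - norm v - t\<bar> \<le> 3 * \<theta> * t"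
proof -
  have norm_d: "\<bar>norm d - t\<bar> \<le> \<theta> * t"
    using norm_near_scaled_unit[OF u t d] .
  have upper: "norm (v + d) \<le> norm v + t + \<theta> * t"
    using norm_triangle_ineq[of v d] norm_d by linarith
  have lower: "norm v + (1 - 3 * \<theta>) * t \<le> norm (v + d)"
  proof (cases "v = 0")
    case True
    then show ?thesis
      using norm_d \<theta> t by (simp add: algebra_simps)
  next
    case False
    have "\<bar>(d - t *\<^sub>R u) \<bullet> v\<bar> \<le> \<theta> * t * norm v"
      using Cauchy_Schwarz_ineq2[of "d - t *\<^sub>R u" v] mult_right_mono[OF d norm_ge_zero, of v]
      by simp
    moreover have "t * ((1 - 2 * \<theta>) * norm v) \<le> t * (u \<bullet> v)"
      using inner_unit_ge_near_scaled_unit[OF u \<theta> s v] t by (intro mult_left_mono)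
    moreover have "d \<bullet> v = t * (u \<bullet> v) + (d - t *\<^sub>R u) \<bullet> v"
      by (simp add: inner_diff_left)
    moreover have "t * (1 - 3 * \<theta>) * norm v = t * ((1 - 2 * \<theta>) * norm v) - \<theta> * t * norm v"
      by (simp add: algebra_simps)
    ultimately have "t * (1 - 3 * \<theta>) * norm v \<le> d \<bullet> v"
      by linarith
    moreover have "(v + d) \<bullet> v = norm v * norm v + d \<bullet> v"
      by (simp add: inner_add_left dot_square_norm power2_eq_square)
    moreover have "(v + d) \<bullet> v \<le> norm (v + d) * norm v"
      using Cauchy_Schwarz_ineq2[of "v + d" v] by linarith
    moreover have "(norm v + (1 - 3 * \<theta>) * t) * norm v = norm v * norm v + t * (1 - 3 * \<theta>) * norm v"
      by (simp add: algebra_simps)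
    ultimately have "(norm v + (1 - 3 * \<theta>) * t) * norm v \<le> norm (v + d) * norm v"
      by linarith
    then show ?thesis
      using False by simp
  qed
  show ?thesis
    using upper lower \<theta> t by (simp add: abs_le_iff algebra_simps)
qed

lemma dist_increment_along_flat_path:
  fixes f :: "real \<Rightarrow> 'a::real_inner"
  assumes u: "norm u = 1" and \<theta>: "0 \<le> \<theta>" "\<theta> \<le> 1/2"
    and flat: "\<And>t1 t2. t1 \<in> S \<Longrightarrow> t2 \<in> S \<Longrightarrow>
                 norm (f t1 - f t2 - (t1 - t2) *\<^sub>R u) \<le> \<theta> * \<bar>t1 - t2\<bar>"
    and S: "q \<in> S" "a \<in> S" "b \<in> S" and order: "q \<le> a" "a \<le> b"
  shows "\<bar>norm (f b - f q) - norm (f a - f q) - (b - a)\<bar> \<le> 3 * \<theta> * (b - a)"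
proof -
  have "norm (f a - f q - (a - q) *\<^sub>R u) \<le> \<theta> * (a - q)"
    using flat[of a q] S order by simp
  moreover have "norm (f b - f a - (b - a) *\<^sub>R u) \<le> \<theta> * (b - a)"
    using flat[of b a] S order by simp
  ultimately show ?thesis
    using norm_add_near_direction[OF u \<theta>, of "a - q" "b - a" "f a - f q" "f b - f a"] order
    by simp
qed

lemma dist_decrement_along_flat_path:
  fixes f :: "real \<Rightarrow> 'a::real_inner"
  assumes u: "norm u = 1" and \<theta>: "0 \<le> \<theta>" "\<theta> \<le> 1/2"
    and flat: "\<And>t1 t2. t1 \<in> S \<Longrightarrow> t2 \<in> S \<Longrightarrow>
                 norm (f t1 - f t2 - (t1 - t2) *\<^sub>R u) \<le> \<theta> * \<bar>t1 - t2\<bar>"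
    and S: "q \<in> S" "a \<in> S" "b \<in> S" and order: "a \<le> b" "b \<le> q"
  shows "\<bar>norm (f a - f q) - norm (f b - f q) - (b - a)\<bar> \<le> 3 * \<theta> * (b - a)"
proof -
  have "norm ((f \<circ> uminus) t1 - (f \<circ> uminus) t2 - (t1 - t2) *\<^sub>R - u) \<le> \<theta> * \<bar>t1 - t2\<bar>"
    if "t1 \<in> uminus ` S" "t2 \<in> uminus ` S" for t1 t2
  proof -
    have "(t1 - t2) *\<^sub>R - u = (- t1 - - t2) *\<^sub>R u" "\<bar>t1 - t2\<bar> = \<bar>- t1 - - t2\<bar>"
      by (simp_all add: algebra_simps)
    moreover have "- t1 \<in> S" "- t2 \<in> S"
      using that by force+
    ultimately show ?thesis
      using flat[of "- t1" "- t2"] by simp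
  qed
  from dist_increment_along_flat_path[where q = "- q" and a = "- b" and b = "- a", OF _ \<theta> this]
  show ?thesis
    using u S order by simp
qed

lemma flat_around_on_interval:
  assumes flat: "flat_around \<theta> u r0 r1 \<gamma>" and R0: "0 \<le> r0" "r0 < r1" "r1 \<le> 1"
    and t: "t1 \<in> {r0..r1}" "t2 \<in> {r0..r1}"
  shows "norm (\<gamma> t1 - \<gamma> t2 - (t1 - t2) *\<^sub>R u) \<le> \<theta> * \<bar>t1 - t2\<bar>"
  using flat R0 t unfolding flat_around_def by auto

theorem lemma3p11:
  fixes \<gamma> :: "real \<Rightarrow> 'a::euclidean_space"
    and h :: "'a \<Rightarrow> real"
    and u :: 'a
    and \<theta> r \<tau> a b q r0 r1 :: real
  assumes curve: "lipschitz_curve 1 \<gamma>"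
    and range: "\<gamma> ` {0..1} \<subseteq> box 0 One"
    and u: "norm u = 1"
    and theta: "0 < \<theta>" "\<theta> < 1/3"
    and R0: "0 \<le> r0" "r0 \<le> r1" "r1 \<le> 1"
    and flat: "flat_around \<theta> u r0 r1 \<gamma>"
    and ab: "a < b" "{a<..<b} \<subseteq> {r0..r1}"
    and q: "q \<in> {r0..r1} - {a<..<b}"
    and tau: "\<tau> > 0"
    and hlip: "\<exists>L. L-lipschitz_on (cbox 0 One) h"
    and hval: "\<And>x. x \<in> {\<gamma> a, \<gamma> b} \<Longrightarrow> h x = r + \<tau> * norm (x - \<gamma> q)"
  shows "(q \<le> a \<longrightarrow> \<bar>(h (\<gamma> b) - h (\<gamma> a)) - \<tau> * (b - a)\<bar> \<le> 3 * \<theta> * \<tau> * (b - a)) \<and>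
         (b \<le> q \<longrightarrow> \<bar>(h (\<gamma> b) - h (\<gamma> a)) - \<tau> * (a - b)\<bar> \<le> 3 * \<theta> * \<tau> * (b - a))"
proof -
  have "{a..b} \<subseteq> {r0..r1}"
    using closure_minimal[OF ab(2)] ab(1) by simp
  then have abR: "a \<in> {r0..r1}" "b \<in> {r0..r1}" and "r0 < r1"
    using ab(1) by auto
  note flat_R0 = flat_around_on_interval[OF flat R0(1) \<open>r0 < r1\<close> R0(3)]
  have \<theta>: "0 \<le> \<theta>" "\<theta> \<le> 1/2"
    using theta by auto
  have qR: "q \<in> {r0..r1}"
    using q by blast
  have h_diff: "h (\<gamma> b) - h (\<gamma> a) = \<tau> * (norm (\<gamma> b - \<gamma> q) - norm (\<gamma> a - \<gamma> q))"
    using hval[of "\<gamma> a"] hval[of "\<gamma> b"] by (simp add: algebra_simps)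
  show ?thesis
  proof (intro conjI impI)
    assume "q \<le> a"
    with dist_increment_along_flat_path[OF u \<theta> flat_R0 qR abR] ab(1)
    show "\<bar>(h (\<gamma> b) - h (\<gamma> a)) - \<tau> * (b - a)\<bar> \<le> 3 * \<theta> * \<tau> * (b - a)"
      using tau by (simp add: h_diff abs_mult flip: right_diff_distrib)
  next
    assume "b \<le> q"
    with dist_decrement_along_flat_path[OF u \<theta> flat_R0 qR abR] ab(1)
    show "\<bar>(h (\<gamma> b) - h (\<gamma> a)) - \<tau> * (a - b)\<bar> \<le> 3 * \<theta> * \<tau> * (b - a)"
      using tau by (simp add: h_diff abs_mult abs_minus_commute flip: right_diff_distrib)
  qed
qed

end
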